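(* For subdistributions $\mu,\nu$ over nondeterministic expressions, the following are equivalent: (a) $\mu\xRightarrow{\tau}\nu$; (b) there is $\rho$ with $\mu\xrightarrow{\tau}\rho$ (combined transition) and $\rho\Rightarrow\nu$; (c) there is a derivation $(\nu_i^{\to},\nu_i^{\times})_{i\in\mathbb N}$ with $\mu=\nu_0^{\to}+\nu_0^{\times}$, $\nu=\sum_{i\in\mathbb N}\nu_i^{\times}$ and $\nu_0^{\times}=\emptyset$.
   Context: Fix a set $\mathsf{Act}$ of actions containing $\tau$. Nondeterministic expressions: $E ::= 0 \mid X \mid \alpha.P \mid \mathrm{rec}\,X.E \mid E + E$; probabilistic expressions: $P ::= \partial(E) \mid P \oplus_p P$ ($0<p<1$). Subdistributions $\mu$ over $S$: $\mu:S\to\mathbb R_{\ge0}$ with $|\mu|=\sum\mu(s)\le1$; $\delta_s$ Dirac, $\emptyset$ empty; operations pointwise. Semantics: least relations with $\partial(E)\mapsto\delta_E$; $P\oplus_pQ\mapsto p\mu+(1-p)\nu$ if $P\mapsto\mu,Q\mapsto\nu$; $\alpha.P\xrightarrow{\alpha}\mu$ if $P\mapsto\mu$; $\mathrm{rec}\,X.E\xrightarrow{\alpha}\mu$ if $E[\mathrm{rec}\,X.E/X]\xrightarrow{\alpha}\mu$; $E+F\xrightarrow{\alpha}\mu$ and $F+E\xrightarrow{\alpha}\mu$ if $E\xrightarrow{\alpha}\mu$. Combined transitions on subdistributions: least relation with $\delta_E\xrightarrow{\alpha}\mu$ if $E\xrightarrow{\alpha}\mu$, closed under $\sum p_i\nu_i\xrightarrow{\alpha}\sum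 p_i\mu_i$ ($\nu_i\xrightarrow{\alpha}\mu_i$, $p_i\ge0$, $\sum p_i\le1$). A derivation is a sequence $(\mu_i^{\to},\mu_i^{\times})_{i\in\mathbb N}$ of subdistributions with $\mu_i^{\to}\xrightarrow{\tau}\mu^{\to}_{i+1}+\mu^{\times}_{i+1}$ for all $i$; $\mu\Rightarrow\nu$ iff some derivation has $\mu=\mu_0^{\to}+\mu_0^{\times}$ and $\nu=\sum_i\mu_i^\times$. $\mu\xRightarrow{\alpha}\nu$ iff $\mu\Rightarrow\rho\xrightarrow{\alpha}\eta\Rightarrow\nu$ for some $\rho,\eta$. *)

theory Defs
  imports "HOL-Analysis.Infinite_Sum"
begin

datatype 'a act = Tau | Vis 'a

datatype ('a, 'v) nexp =
    NZero
  | NVar 'v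
  | NPre "'a act" "('a, 'v) pexp"
  | NRec 'v "('a, 'v) nexp"
  | NSum "('a, 'v) nexp" "('a, 'v) nexp"
and ('a, 'v) pexp =
    PDirac "('a, 'v) nexp"
  | PChoice "('a, 'v) pexp" real "('a, 'v) pexp"

primrec substN :: "('a,'v) nexp \<Rightarrow> 'v \<Rightarrow> ('a,'v) nexp \<Rightarrow> ('a,'v) nexp"
  and substP :: "('a,'v) pexp \<Rightarrow> 'v \<Rightarrow> ('a,'v) nexp \<Rightarrow> ('a,'v) pexp" where
  "substN NZero X F = NZero"
| "substN (NVar Y) X F = (if Y = X then F else NVar Y)"
| "substN (NPre a P) X F = NPre a (substP P X F)"
| "substN (NRec Y E) X F = (if Y = X then NRec Y E else NRec Y (substN E X F))"
| "substN (NSum E1 E2) X F = NSum (substN E1 X F) (substN E2 X F)"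
| "substP (PDirac E) X F = PDirac (substN E X F)"
| "substP (PChoice P p Q) X F = PChoice (substP P X F) p (substP Q X F)"

type_synonym ('a,'v) sdist = "('a,'v) nexp \<Rightarrow> real"

definition subdist :: "('s \<Rightarrow> real) \<Rightarrow> bool" where
  "subdist \<mu> \<longleftrightarrow> (\<forall>s. 0 \<le> \<mu> s) \<and> \<mu> summable_on UNIV \<and> infsum \<mu> UNIV \<le> 1"

definition dirac :: "'s \<Rightarrow> 's \<Rightarrow> real" where
  "dirac s = (\<lambda>t. if t = s then 1 else 0)"

definition empty_dist :: "'s \<Rightarrow> real" where
  "empty_dist = (\<lambda>_. 0)"

inductive pstep :: "('a,'v) pexp \<Rightarrow> ('a,'v) sdist \<Rightarrow> bool" where
  pstep_dirac: "pstep (PDirac E) (dirac E)"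
| pstep_choice: "\<lbrakk>0 < p; p < 1; pstep P \<mu>; pstep Q \<nu>\<rbrakk>
     \<Longrightarrow> pstep (PChoice P p Q) (\<lambda>s. p * \<mu> s + (1 - p) * \<nu> s)"

inductive ntrans :: "('a,'v) nexp \<Rightarrow> 'a act \<Rightarrow> ('a,'v) sdist \<Rightarrow> bool" where
  ntrans_pre: "pstep P \<mu> \<Longrightarrow> ntrans (NPre \<alpha> P) \<alpha> \<mu>"
| ntrans_rec: "ntrans (substN E X (NRec X E)) \<alpha> \<mu> \<Longrightarrow> ntrans (NRec X E) \<alpha> \<mu>"
| ntrans_suml: "ntrans E \<alpha> \<mu> \<Longrightarrow> ntrans (NSum E F) \<alpha> \<mu>"
| ntrans_sumr: "ntrans E \<alpha> \<mu> \<Longrightarrow> ntrans (NSum F E) \<alpha> \<mu>"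

text \<open>Combined transitions on subdistributions (countable convex-style combinations,
  indexed by nat; finite combinations are the case of eventually-zero weights).\<close>

inductive ctrans :: "('a,'v) sdist \<Rightarrow> 'a act \<Rightarrow> ('a,'v) sdist \<Rightarrow> bool" where
  ctrans_base: "ntrans E \<alpha> \<mu> \<Longrightarrow> ctrans (dirac E) \<alpha> \<mu>"
| ctrans_comb: "\<lbrakk>\<And>i. ctrans (\<nu> i) \<alpha> (\<mu> i); \<And>i. 0 \<le> p i; summable p; (\<Sum>i. p i) \<le> 1\<rbrakk>
     \<Longrightarrow> ctrans (\<lambda>s. \<Sum>i. p i * \<nu> i s) \<alpha> (\<lambda>s. \<Sum>i. p i * \<mu> i s)"

definition derivation :: "(nat \<Rightarrow> ('a,'v) sdist) \<Rightarrow> (nat \<Rightarrow> ('a,'v) sdist) \<Rightarrow> bool" where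
  "derivation mto mx \<longleftrightarrow>
     (\<forall>i. subdist (mto i) \<and> subdist (mx i)) \<and>
     (\<forall>i. ctrans (mto i) Tau (\<lambda>s. mto (Suc i) s + mx (Suc i) s))"

definition weak :: "('a,'v) sdist \<Rightarrow> ('a,'v) sdist \<Rightarrow> bool" where
  "weak \<mu> \<nu> \<longleftrightarrow> (\<exists>mto mx. derivation mto mx \<and>
      \<mu> = (\<lambda>s. mto 0 s + mx 0 s) \<and> \<nu> = (\<lambda>s. \<Sum>i. mx i s))"

definition weak_trans :: "('a,'v) sdist \<Rightarrow> 'a act \<Rightarrow> ('a,'v) sdist \<Rightarrow> bool" where
  "weak_trans \<mu> \<alpha> \<nu> \<longleftrightarrow> (\<exists>\<rho> \<eta>. weak \<mu> \<rho> \<and> ctrans \<rho> \<alpha> \<eta> \<and> weak \<eta> \<nu>)"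

end

theory Submission
  imports Defs "HOL-Analysis.Elementary_Metric_Spaces"
begin

text \<open>
  Since \<open>\<Rightarrow>\<close> is reflexive, (b) gives (a); and (b) and (c) are translated into each other by
  prepending \<open>\<mu>\<close> to a derivation, resp. dropping the first step of one whose first stopped
  component is empty. The substance is (a) \<open>\<Longrightarrow>\<close> (c). Let \<open>\<mu> \<Rightarrow> \<rho>\<close> via a derivation
  \<open>(mto, mx)\<close>, \<open>\<rho> \<longrightarrow>\<^sub>\<tau> \<eta>\<close> and \<open>\<eta> \<Rightarrow> \<nu>\<close> via \<open>(kto, kx)\<close>. The step from
  \<open>\<rho> = \<Sum>\<^sub>k mx\<^sub>k\<close> splits into steps \<open>mx\<^sub>k \<longrightarrow>\<^sub>\<tau> \<eta>\<^sub>k\<close> with \<open>\<Sum>\<^sub>k \<eta>\<^sub>k = \<eta>\<close>, and the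
  derivation from \<open>\<eta>\<close> splits accordingly into derivations from the \<open>\<eta>\<^sub>k\<close>, by dividing every
  subdistribution of it proportionally. So instead of stopping at time \<open>k\<close>, each \<open>mx\<^sub>k\<close> can
  continue along its share of the derivation from \<open>\<eta>\<close>; together with \<open>(mto, mx)\<close> these
  staggered pieces form one derivation from \<open>\<mu>\<close> that stops nothing at time \<open>0\<close> and stops \<open>\<nu>\<close> in
  total. Splitting a combined transition goes through its normal form as a countable mixture of
  single transitions; all rearrangements of series are justified by nonnegativity.
\<close>

section \<open>Nonnegative double series\<close>

lemma nonneg_has_sum_Sigma:
  fixes g :: "'a \<Rightarrow> 'b \<Rightarrow> real"
  assumes nonneg: "\<And>i j. 0 \<le> g i j" and rows: "\<And>i. (g i has_sum a i) UNIV"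
    and total: "(a has_sum T) UNIV"
  shows "((\<lambda>(i,j). g i j) has_sum T) UNIV"
proof -
  have "(\<lambda>(i,j). g i j) summable_on UNIV \<times> UNIV"
    by (rule summable_on_SigmaI[where g=a]) (use nonneg rows has_sum_imp_summable[OF total] in auto)
  then have "((\<lambda>(i,j). g i j) has_sum T) (UNIV \<times> UNIV)"
    by (intro has_sum_SigmaI[where g=a]) (use rows total in auto)
  then show ?thesis by simp
qed

lemma nonneg_has_sum_swap:
  fixes g :: "'a \<Rightarrow> 'b \<Rightarrow> real"
  assumes "\<And>i j. 0 \<le> g i j" and "\<And>i. (g i has_sum a i) UNIV"
    and cols: "\<And>j. ((\<lambda>i. g i j) has_sum b j) UNIV" and "(a has_sum T) UNIV"
  shows "(b has_sum T) UNIV"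
proof -
  have "((\<lambda>(i,j). g i j) has_sum T) (UNIV \<times> UNIV)"
    using nonneg_has_sum_Sigma[OF assms(1,2,4)] by simp
  then have "((\<lambda>(j,i). g i j) has_sum T) (UNIV \<times> UNIV)"
    by (subst (asm) has_sum_swap) simp
  then show ?thesis
    by (rule has_sum_SigmaD) (use cols in simp)
qed

lemma sums_imp_nonneg:
  fixes f :: "nat \<Rightarrow> real"
  shows "f sums S \<Longrightarrow> (\<And>n. 0 \<le> f n) \<Longrightarrow> 0 \<le> S"
  using sums_le[OF _ sums_zero] by blast

lemma nonneg_sums_term_le:
  fixes f :: "nat \<Rightarrow> real"
  assumes "f sums S" and "\<And>n. 0 \<le> f n"
  shows "f k \<le> S"
  using sums_le[OF _ sums_single[of k f] assms(1)] assms(2) by simp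

lemma summable_mult_le_one:
  fixes p f :: "nat \<Rightarrow> real"
  assumes p: "summable p" "\<And>i. 0 \<le> p i" and f: "\<And>i. 0 \<le> f i" "\<And>i. f i \<le> 1"
  shows "summable (\<lambda>i. p i * f i)" and "(\<Sum>i. p i * f i) \<le> suminf p"
proof -
  have "norm (p i * f i) \<le> p i" for i
    using p(2)[of i] f[of i] by (simp add: abs_mult mult_left_le)
  then show "summable (\<lambda>i. p i * f i)"
    by (rule summable_comparison_test'[OF p(1)])
  then show "(\<Sum>i. p i * f i) \<le> suminf p"
    using p f by (intro suminf_le) (auto simp: mult_left_le)
qed

lemma nonneg_sums_swap:
  fixes g :: "nat \<Rightarrow> nat \<Rightarrow> real"
  assumes nonneg: "\<And>i j. 0 \<le> g i j" and rows: "\<And>i. g i sums a i"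
    and cols: "\<And>j. (\<lambda>i. g i j) sums b j" and total: "a sums T"
  shows "b sums T"
proof -
  have "0 \<le> a i" "0 \<le> b j" for i j
    using sums_imp_nonneg nonneg rows cols by blast+
  then show ?thesis
    using nonneg_has_sum_swap[of g a b T] assms
    by (metis has_sum_imp_sums sums_nonneg_imp_has_sum)
qed

lemma nonneg_sums_prod_decode:
  fixes g :: "nat \<Rightarrow> nat \<Rightarrow> real"
  assumes nonneg: "\<And>i j. 0 \<le> g i j" and rows: "\<And>i. g i sums a i" and total: "a sums T"
  shows "(\<lambda>k. case_prod g (prod_decode k)) sums T"
proof -
  have "0 \<le> a i" for i
    using sums_imp_nonneg nonneg rows by blast
  then have "((\<lambda>(i,j). g i j) has_sum T) UNIV"
    using nonneg_has_sum_Sigma[of g a T] assms sums_nonneg_imp_has_sum by blast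
  then have "((\<lambda>k. case_prod g (prod_decode k)) has_sum T) UNIV"
    using has_sum_reindex_bij_betw[OF bij_prod_decode, of "case_prod g"] by simp
  then show ?thesis by (rule has_sum_imp_sums)
qed

lemma nonneg_sums_diagonal:
  fixes f :: "nat \<Rightarrow> nat \<Rightarrow> real"
  assumes nonneg: "\<And>k m. 0 \<le> f k m" and cols: "\<And>m. (\<lambda>k. f k m) sums c m" and total: "c sums T"
  shows "(\<lambda>n. \<Sum>k\<le>n. f k (n - k)) sums T"
proof -
  have "0 \<le> c m" for m
    using sums_imp_nonneg nonneg cols by blast
  then have "((\<lambda>(m,k). f k m) has_sum T) UNIV"
    using nonneg_has_sum_Sigma[of "\<lambda>m k. f k m" c T] assms sums_nonneg_imp_has_sum by blast
  also have "?this \<longleftrightarrow> ((\<lambda>(n,k). f k (n - k)) has_sum T) (SIGMA n:UNIV. {..n})"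
    by (rule has_sum_reindex_bij_witness[where i="\<lambda>(n,k). (n - k, k)" and j="\<lambda>(m,k). (m + k, k)"])
      auto
  finally have "((\<lambda>n. \<Sum>k\<le>n. f k (n - k)) has_sum T) UNIV"
    by (rule has_sum_Sigma') (simp add: has_sum_finite_iff)
  then show ?thesis by (rule has_sum_imp_sums)
qed

section \<open>Mass of a subdistribution\<close>

definition has_mass :: "('s \<Rightarrow> real) \<Rightarrow> real \<Rightarrow> bool" where
  "has_mass \<mu> m \<longleftrightarrow> (\<forall>s. 0 \<le> \<mu> s) \<and> (\<mu> has_sum m) UNIV"

lemma has_mass_nonneg: "has_mass \<mu> m \<Longrightarrow> 0 \<le> m"
  unfolding has_mass_def by (auto intro: has_sum_nonneg)

lemma has_mass_point_le: "has_mass \<mu> m \<Longrightarrow> \<mu> s \<le> m"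
  unfolding has_mass_def
  by (elim conjE, rule has_sum_mono_neutral[where A="{s}" and B=UNIV]) (auto intro: has_sum_finiteI)

lemma has_mass_unique: "has_mass \<mu> a \<Longrightarrow> has_mass \<mu> b \<Longrightarrow> a = b"
  unfolding has_mass_def by (auto intro: has_sum_unique)

lemma has_mass_zero: "has_mass (\<lambda>s. 0) 0"
  unfolding has_mass_def by simp

lemma has_mass_add: "has_mass \<mu> a \<Longrightarrow> has_mass \<nu> b \<Longrightarrow> has_mass (\<lambda>s. \<mu> s + \<nu> s) (a + b)"
  unfolding has_mass_def by (auto intro: has_sum_add)

lemma has_mass_cmult: "0 \<le> c \<Longrightarrow> has_mass \<mu> m \<Longrightarrow> has_mass (\<lambda>s. c * \<mu> s) (c * m)"
  unfolding has_mass_def by (auto intro: has_sum_cmult_right)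

lemma has_mass_sum:
  "finite K \<Longrightarrow> (\<And>k. k \<in> K \<Longrightarrow> has_mass (\<mu> k) (m k))
    \<Longrightarrow> has_mass (\<lambda>s. \<Sum>k\<in>K. \<mu> k s) (\<Sum>k\<in>K. m k)"
  by (induction K rule: finite_induct) (auto intro: has_mass_zero has_mass_add)

lemma has_mass_dominated:
  assumes "has_mass \<mu> m" and "\<And>s. 0 \<le> \<nu> s" and "\<And>s. \<nu> s \<le> \<mu> s"
  shows "\<exists>m'. has_mass \<nu> m'"
proof -
  have "\<nu> summable_on UNIV"
    using assms summable_on_comparison_test[of \<mu> UNIV \<nu>] by (auto simp: has_mass_def has_sum_iff)
  then show ?thesis
    using assms(2) has_sum_infsum unfolding has_mass_def by blast
qed

lemma subdist_iff_has_mass: "subdist \<mu> \<longleftrightarrow> (\<exists>m \<le> 1. has_mass \<mu> m)"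
  unfolding subdist_def has_mass_def by (auto simp: has_sum_iff)

lemma subdist_empty_dist: "subdist empty_dist"
  unfolding subdist_def empty_dist_def by simp

lemma has_mass_dirac: "has_mass (dirac E) 1"
  unfolding has_mass_def dirac_def
  by (auto intro!: has_sum_finite_neutralI[where B="{E}"] split: if_splits)

lemma pstep_has_mass: "pstep P \<mu> \<Longrightarrow> has_mass \<mu> 1"
proof (induction rule: pstep.induct)
  case (pstep_dirac E)
  show ?case by (rule has_mass_dirac)
next
  case (pstep_choice p P \<mu> Q \<nu>)
  then have "has_mass (\<lambda>s. p * \<mu> s + (1 - p) * \<nu> s) (p * 1 + (1 - p) * 1)"
    by (intro has_mass_add has_mass_cmult) auto
  then show ?case by simp
qed

lemma ntrans_has_mass: "ntrans E \<alpha> \<mu> \<Longrightarrow> has_mass \<mu> 1"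
  by (induction rule: ntrans.induct) (auto intro: pstep_has_mass)

lemma has_mass_sums_iff:
  fixes \<mu> :: "nat \<Rightarrow> 's \<Rightarrow> real"
  assumes parts: "\<And>i. has_mass (\<mu> i) (m i)" and sum: "\<And>s. (\<lambda>i. \<mu> i s) sums M s"
  shows "has_mass M T \<longleftrightarrow> m sums T"
proof -
  have nonneg: "0 \<le> \<mu> i s" for i s
    using parts by (simp add: has_mass_def)
  have M_nonneg: "0 \<le> M s" for s
    using sums_imp_nonneg[OF sum] nonneg by blast
  have m_nonneg: "0 \<le> m i" for i
    using has_mass_nonneg[OF parts] .
  have rows: "((\<lambda>i. \<mu> i s) has_sum M s) UNIV" for s
    using sums_nonneg_imp_has_sum[OF sum] nonneg by blast
  have cols: "(\<mu> i has_sum m i) UNIV" for i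
    using parts by (simp add: has_mass_def)
  show ?thesis
  proof
    assume "has_mass M T"
    then have "(m has_sum T) UNIV"
      using nonneg_has_sum_swap[of "\<lambda>s i. \<mu> i s", OF nonneg rows cols] by (simp add: has_mass_def)
    then show "m sums T" by (rule has_sum_imp_sums)
  next
    assume "m sums T"
    then have "(m has_sum T) UNIV"
      using sums_nonneg_imp_has_sum m_nonneg by blast
    then have "(M has_sum T) UNIV"
      using nonneg_has_sum_swap[of \<mu>, OF nonneg cols rows] by simp
    then show "has_mass M T"
      using M_nonneg by (simp add: has_mass_def)
  qed
qed

section \<open>Combined transitions as mixtures of single transitions\<close>

definition point_mixture ::
    "('a,'v) sdist \<Rightarrow> 'a act \<Rightarrow> ('a,'v) sdist \<Rightarrow> (nat \<Rightarrow> real) \<Rightarrow> (nat \<Rightarrow> ('a,'v) nexp)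
      \<Rightarrow> (nat \<Rightarrow> ('a,'v) sdist) \<Rightarrow> bool" where
  "point_mixture \<mu> \<alpha> \<eta> q E \<theta> \<longleftrightarrow>
     (\<forall>j. ntrans (E j) \<alpha> (\<theta> j)) \<and> (\<forall>j. 0 \<le> q j) \<and> summable q \<and> suminf q \<le> 1 \<and>
     (\<forall>s. (\<lambda>j. q j * dirac (E j) s) sums \<mu> s) \<and> (\<forall>s. (\<lambda>j. q j * \<theta> j s) sums \<eta> s)"

lemma point_mixture_has_mass:
  assumes "point_mixture \<mu> \<alpha> \<eta> q E \<theta>"
  shows "has_mass \<mu> (suminf q)" and "has_mass \<eta> (suminf q)"
proof -
  have q: "0 \<le> q j" "q sums suminf q" for j
    using assms by (auto simp: point_mixture_def summable_sums)
  have parts: "has_mass (\<lambda>s. q j * dirac (E j) s) (q j)" "has_mass (\<lambda>s. q j * \<theta> j s) (q j)" for j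
    using has_mass_cmult[OF q(1) has_mass_dirac] has_mass_cmult[OF q(1) ntrans_has_mass[of "E j" \<alpha> "\<theta> j"]] assms
    by (auto simp: point_mixture_def)
  have "has_mass \<mu> (suminf q) \<longleftrightarrow> q sums suminf q"
    by (rule has_mass_sums_iff[OF parts(1)]) (use assms in \<open>simp add: point_mixture_def\<close>)
  then show "has_mass \<mu> (suminf q)"
    using q(2) by simp
  have "has_mass \<eta> (suminf q) \<longleftrightarrow> q sums suminf q"
    by (rule has_mass_sums_iff[OF parts(2)]) (use assms in \<open>simp add: point_mixture_def\<close>)
  then show "has_mass \<eta> (suminf q)"
    using q(2) by simp
qed

lemma ctrans_of_point_mixture:
  assumes "point_mixture \<mu> \<alpha> \<eta> q E \<theta>"
  shows "ctrans \<mu> \<alpha> \<eta>"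
proof -
  have "ctrans (\<lambda>s. \<Sum>j. q j * dirac (E j) s) \<alpha> (\<lambda>s. \<Sum>j. q j * \<theta> j s)"
    using assms by (intro ctrans_comb ctrans_base) (auto simp: point_mixture_def)
  moreover have "\<mu> = (\<lambda>s. \<Sum>j. q j * dirac (E j) s)" and "\<eta> = (\<lambda>s. \<Sum>j. q j * \<theta> j s)"
    using assms by (auto simp: point_mixture_def sums_unique)
  ultimately show ?thesis by simp
qed

lemma point_mixture_combine:
  assumes R: "\<And>i. point_mixture (\<nu> i) \<alpha> (\<mu> i) (Q i) (EE i) (TH i)" and p: "\<And>i. 0 \<le> p i"
    and c: "(\<lambda>i. p i * suminf (Q i)) sums c" "c \<le> 1"
    and N: "\<And>s. (\<lambda>i. p i * \<nu> i s) sums N s" and M: "\<And>s. (\<lambda>i. p i * \<mu> i s) sums M s"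
  shows "point_mixture N \<alpha> M (\<lambda>k. case prod_decode k of (i, j) \<Rightarrow> p i * Q i j)
           (\<lambda>k. case_prod EE (prod_decode k)) (\<lambda>k. case_prod TH (prod_decode k))"
proof -
  have Q: "0 \<le> Q i j" "Q i sums suminf (Q i)" for i j
    using R[of i] by (auto simp: point_mixture_def summable_sums)
  have TH: "0 \<le> TH i j s" for i j s
    using R[of i] ntrans_has_mass by (auto simp: point_mixture_def has_mass_def)
  have dirac_nonneg: "0 \<le> dirac (EE i j) s" for i j s
    by (simp add: dirac_def)
  have weights: "(\<lambda>k. case prod_decode k of (i, j) \<Rightarrow> p i * Q i j) sums c"
    by (rule nonneg_sums_prod_decode[where a="\<lambda>i. p i * suminf (Q i)"])
      (use p Q c in \<open>auto intro: sums_mult\<close>)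
  have "(\<lambda>k. case prod_decode k of (i, j) \<Rightarrow> p i * (Q i j * dirac (EE i j) s)) sums N s" for s
    by (rule nonneg_sums_prod_decode[where a="\<lambda>i. p i * \<nu> i s"])
      (use p Q N R dirac_nonneg in \<open>auto intro!: sums_mult mult_nonneg_nonneg simp: point_mixture_def\<close>)
  moreover have "(\<lambda>k. case prod_decode k of (i, j) \<Rightarrow> p i * (Q i j * TH i j s)) sums M s" for s
    by (rule nonneg_sums_prod_decode[where a="\<lambda>i. p i * \<mu> i s"])
      (use p Q M R TH in \<open>auto intro!: sums_mult mult_nonneg_nonneg simp: point_mixture_def\<close>)
  ultimately show ?thesis
    using R weights c p Q unfolding point_mixture_def
    by (auto simp: case_prod_beta mult.assoc sums_iff)
qed

lemma ctrans_imp_point_mixture: "ctrans \<mu> \<alpha> \<eta> \<Longrightarrow> \<exists>q E \<theta>. point_mixture \<mu> \<alpha> \<eta> q E \<theta>"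
proof (induction rule: ctrans.induct)
  case (ctrans_base E \<alpha> \<mu>)
  have single: "(\<lambda>j::nat. (if j = 0 then 1 else 0) * x) sums x" for x :: real
  proof -
    have "(\<lambda>j::nat. (if j = 0 then 1 else 0) * x) = (\<lambda>j. if j = 0 then x else 0)"
      by auto
    then show ?thesis
      using sums_single[of 0 "\<lambda>_. x"] by simp
  qed
  have "point_mixture (dirac E) \<alpha> \<mu> (\<lambda>j. if j = 0 then 1 else 0) (\<lambda>_. E) (\<lambda>_. \<mu>)"
    using ctrans_base single[of 1] single by (auto simp: point_mixture_def sums_iff)
  then show ?case by blast
next
  case (ctrans_comb \<nu> \<alpha> \<mu> p)
  obtain Q EE TH where R: "\<And>i. point_mixture (\<nu> i) \<alpha> (\<mu> i) (Q i) (EE i) (TH i)"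
    using ctrans_comb.IH by metis
  have masses: "has_mass (\<nu> i) (suminf (Q i))" "has_mass (\<mu> i) (suminf (Q i))" for i
    using point_mixture_has_mass[OF R[of i]] by blast+
  have Q: "0 \<le> suminf (Q i)" "suminf (Q i) \<le> 1" for i
    using has_mass_nonneg[OF masses(1)] R[of i] by (auto simp: point_mixture_def)
  note bounded_by_p = summable_mult_le_one[OF ctrans_comb.hyps(3,2)]
  have \<nu>: "0 \<le> \<nu> i s" "\<nu> i s \<le> 1" and \<mu>: "0 \<le> \<mu> i s" "\<mu> i s \<le> 1" for i s
    using masses[of i] has_mass_point_le[OF masses(1)[of i], of s] has_mass_point_le[OF masses(2)[of i], of s]
      Q(2)[of i] unfolding has_mass_def by auto
  have "(\<lambda>i. p i * suminf (Q i)) sums (\<Sum>i. p i * suminf (Q i))"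
    using bounded_by_p(1)[of "\<lambda>i. suminf (Q i)"] Q by (simp add: summable_sums)
  moreover have "(\<Sum>i. p i * suminf (Q i)) \<le> 1"
    using bounded_by_p(2)[of "\<lambda>i. suminf (Q i)"] Q ctrans_comb.hyps(4) by simp
  moreover have "(\<lambda>i. p i * \<nu> i s) sums (\<Sum>i. p i * \<nu> i s)"
    and "(\<lambda>i. p i * \<mu> i s) sums (\<Sum>i. p i * \<mu> i s)" for s
    using bounded_by_p(1)[of "\<lambda>i. \<nu> i s"] bounded_by_p(1)[of "\<lambda>i. \<mu> i s"] \<nu> \<mu>
    by (simp_all add: summable_sums)
  ultimately have "point_mixture (\<lambda>s. \<Sum>i. p i * \<nu> i s) \<alpha> (\<lambda>s. \<Sum>i. p i * \<mu> i s)
      (\<lambda>k. case prod_decode k of (i, j) \<Rightarrow> p i * Q i j)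
      (\<lambda>k. case_prod EE (prod_decode k)) (\<lambda>k. case_prod TH (prod_decode k))"
    by (rule point_mixture_combine[OF R ctrans_comb.hyps(2)])
  then show ?case by blast
qed

lemma ctrans_has_mass: "ctrans \<mu> \<alpha> \<eta> \<Longrightarrow> \<exists>m \<le> 1. has_mass \<mu> m \<and> has_mass \<eta> m"
  using ctrans_imp_point_mixture point_mixture_has_mass by (metis point_mixture_def)

lemma ctrans_zero: "ctrans (\<lambda>s. 0) \<alpha> (\<lambda>s. 0)"
  by (rule ctrans_of_point_mixture[where q="\<lambda>_. 0" and E="\<lambda>_. NPre \<alpha> (PDirac NZero)"
        and \<theta>="\<lambda>_. dirac NZero"]) (auto simp: point_mixture_def intro: ntrans_pre pstep_dirac)

lemma ctrans_sum:
  fixes \<mu> \<eta> :: "nat \<Rightarrow> ('a,'v) sdist"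
  assumes steps: "\<And>k. k \<le> n \<Longrightarrow> ctrans (\<mu> k) \<alpha> (\<eta> k)"
    and mass: "has_mass (\<lambda>s. \<Sum>k\<le>n. \<mu> k s) m" "m \<le> 1"
  shows "ctrans (\<lambda>s. \<Sum>k\<le>n. \<mu> k s) \<alpha> (\<lambda>s. \<Sum>k\<le>n. \<eta> k s)"
proof -
  define pad where "pad f k = (if k \<le> n then f k else (\<lambda>s. 0))" for f :: "nat \<Rightarrow> ('a,'v) sdist" and k
  have "\<forall>k. \<exists>q E \<theta>. point_mixture (pad \<mu> k) \<alpha> (pad \<eta> k) q E \<theta>"
    using steps by (auto simp: pad_def intro: ctrans_imp_point_mixture ctrans_zero)
  then obtain Q EE TH where R: "\<And>k. point_mixture (pad \<mu> k) \<alpha> (pad \<eta> k) (Q k) (EE k) (TH k)"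
    by metis
  define p :: "nat \<Rightarrow> real" where "p k = (if k \<le> n then 1 else 0)" for k
  have truncate: "(\<lambda>k. p k * f k) sums (\<Sum>k\<le>n. f k)" for f :: "nat \<Rightarrow> real"
  proof -
    have "(\<lambda>k. p k * f k) sums (\<Sum>k\<le>n. p k * f k)"
      by (rule sums_finite) (auto simp: p_def)
    then show ?thesis by (simp add: p_def)
  qed
  have "has_mass (\<mu> k) (suminf (Q k))" if "k \<le> n" for k
    using point_mixture_has_mass(1)[OF R[of k]] that by (simp add: pad_def)
  then have "has_mass (\<lambda>s. \<Sum>k\<le>n. \<mu> k s) (\<Sum>k\<le>n. suminf (Q k))"
    by (intro has_mass_sum) auto
  then have "(\<Sum>k\<le>n. suminf (Q k)) \<le> 1"
    using has_mass_unique mass by blast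
  with truncate have "point_mixture (\<lambda>s. \<Sum>k\<le>n. pad \<mu> k s) \<alpha> (\<lambda>s. \<Sum>k\<le>n. pad \<eta> k s)
      (\<lambda>k. case prod_decode k of (i, j) \<Rightarrow> p i * Q i j)
      (\<lambda>k. case_prod EE (prod_decode k)) (\<lambda>k. case_prod TH (prod_decode k))"
    by (intro point_mixture_combine[OF R]) (auto simp: p_def)
  moreover have "(\<lambda>s. \<Sum>k\<le>n. pad f k s) = (\<lambda>s. \<Sum>k\<le>n. f k s)" for f
    by (auto simp: pad_def intro!: sum.cong)
  ultimately show ?thesis
    by (auto dest: ctrans_of_point_mixture)
qed

lemma point_mixture_scale:
  assumes R: "point_mixture \<mu> \<alpha> \<eta> q E \<theta>" and w: "\<And>s. 0 \<le> w s" "\<And>s. w s \<le> 1"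
  shows "point_mixture (\<lambda>s. w s * \<mu> s) \<alpha> (\<lambda>s. \<Sum>j. q j * w (E j) * \<theta> j s) (\<lambda>j. q j * w (E j)) E \<theta>"
proof -
  have q: "0 \<le> q j" "summable q" "suminf q \<le> 1" for j
    using R by (auto simp: point_mixture_def)
  have \<theta>: "0 \<le> \<theta> j s" for j s
    using R ntrans_has_mass by (auto simp: point_mixture_def has_mass_def)
  have weights: "summable (\<lambda>j. q j * w (E j))" "(\<Sum>j. q j * w (E j)) \<le> 1"
    using summable_mult_le_one[of q "\<lambda>j. w (E j)"] q w by force+
  have "(\<lambda>j. q j * w (E j) * dirac (E j) s) sums (w s * \<mu> s)" for s
  proof -
    have "(\<lambda>j. q j * w (E j) * dirac (E j) s) = (\<lambda>j. w s * (q j * dirac (E j) s))"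
      by (auto simp: fun_eq_iff dirac_def)
    then show ?thesis
      using sums_mult[of _ "\<mu> s" "w s"] R by (simp add: point_mixture_def)
  qed
  moreover have "summable (\<lambda>j. q j * w (E j) * \<theta> j s)" for s
  proof -
    have "summable (\<lambda>j. q j * \<theta> j s)"
      using R by (auto simp: point_mixture_def sums_iff)
    then have "summable (\<lambda>j. (q j * \<theta> j s) * w (E j))"
      by (rule summable_mult_le_one(1)) (use q \<theta> w in simp_all)
    then show ?thesis
      by (simp add: mult_ac)
  qed
  ultimately show ?thesis
    using R q(1) w weights unfolding point_mixture_def by (simp add: summable_sums)
qed

lemma point_mixture_partition:
  assumes R: "point_mixture \<mu> \<alpha> \<eta> q E \<theta>" and w: "\<And>k s. 0 \<le> w k s" "\<And>k s. w k s \<le> 1"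
    and w_sums: "\<And>s. \<mu> s \<noteq> 0 \<Longrightarrow> (\<lambda>k. w k s) sums 1"
  shows "(\<lambda>k. \<Sum>j. q j * w k (E j) * \<theta> j s) sums \<eta> s"
proof (rule nonneg_sums_swap[where g="\<lambda>j k. q j * w k (E j) * \<theta> j s"])
  have q: "0 \<le> q j" and \<theta>: "0 \<le> \<theta> j s" for j
    using R ntrans_has_mass by (auto simp: point_mixture_def has_mass_def)
  then show "0 \<le> q j * w k (E j) * \<theta> j s" for j k
    using w by simp
  show "(\<lambda>j. q j * \<theta> j s) sums \<eta> s"
    using R by (simp add: point_mixture_def)
  show "(\<lambda>j. q j * w k (E j) * \<theta> j s) sums (\<Sum>j. q j * w k (E j) * \<theta> j s)" for k
    using point_mixture_scale[OF R, of "w k"] w by (simp add: point_mixture_def)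
  show "(\<lambda>k. q j * w k (E j) * \<theta> j s) sums (q j * \<theta> j s)" for j
  proof (cases "\<mu> (E j) = 0")
    case True
    have "q j \<le> \<mu> (E j)"
      using nonneg_sums_term_le[of "\<lambda>j'. q j' * dirac (E j') (E j)" "\<mu> (E j)" j] R
      by (auto simp: point_mixture_def dirac_def)
    then show ?thesis
      using True q[of j] by simp
  next
    case False
    show ?thesis
      using sums_mult[OF w_sums[OF False], of "q j * \<theta> j s"] by (simp add: mult_ac)
  qed
qed

lemma ctrans_split:
  assumes C: "ctrans \<mu> \<alpha> \<eta>" and parts_nonneg: "\<And>k s. 0 \<le> \<mu>s k s"
    and parts: "\<And>s. (\<lambda>k. \<mu>s k s) sums \<mu> s"
  obtains \<eta>s where "\<And>k. ctrans (\<mu>s k) \<alpha> (\<eta>s k)" and "\<And>s. (\<lambda>k. \<eta>s k s) sums \<eta> s"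
proof -
  obtain q E \<theta> where R: "point_mixture \<mu> \<alpha> \<eta> q E \<theta>"
    using ctrans_imp_point_mixture[OF C] by blast
  have part_le: "\<mu>s k s \<le> \<mu> s" for k s
    by (rule nonneg_sums_term_le[OF parts parts_nonneg])
  text \<open>Where \<open>\<mu> s = 0\<close>, every \<open>\<mu>s k s\<close> vanishes and division by zero yields the weight \<open>0\<close>.\<close>
  define w where "w k s = \<mu>s k s / \<mu> s" for k s
  have w: "0 \<le> w k s" "w k s \<le> 1" for k s
    using parts_nonneg[of k s] part_le[of k s] by (auto simp: w_def divide_le_eq_1)
  have w_mult: "(\<lambda>s. w k s * \<mu> s) = \<mu>s k" for k
  proof
    show "w k s * \<mu> s = \<mu>s k s" for s
      using parts_nonneg[of k s] part_le[of k s] by (cases "\<mu> s = 0") (auto simp: w_def)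
  qed
  have w_sums: "(\<lambda>k. w k s) sums 1" if "\<mu> s \<noteq> 0" for s
    using sums_divide[OF parts[of s], of "\<mu> s"] that by (simp add: w_def)
  define \<eta>s where "\<eta>s k s = (\<Sum>j. q j * w k (E j) * \<theta> j s)" for k s
  have "ctrans (\<mu>s k) \<alpha> (\<eta>s k)" for k
    using ctrans_of_point_mixture[OF point_mixture_scale[OF R, of "w k"]] w
    unfolding w_mult \<eta>s_def by simp
  moreover have "(\<lambda>k. \<eta>s k s) sums \<eta> s" for s
    unfolding \<eta>s_def by (rule point_mixture_partition[OF R w w_sums])
  ultimately show ?thesis
    by (rule that)
qed

lemma ctrans_chain_mass_balance:
  assumes A: "\<And>n. has_mass (nto n) (A n)" and B: "\<And>n. has_mass (nx n) (B n)"
    and start: "A 0 \<le> 1"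
    and step: "\<And>n. A n \<le> 1 \<Longrightarrow> ctrans (nto n) Tau (\<lambda>s. nto (Suc n) s + nx (Suc n) s)"
  shows "A n + (\<Sum>j<n. B (Suc j)) = A 0"
proof (induction n)
  case (Suc n)
  have "0 \<le> (\<Sum>j<n. B (Suc j))"
    using has_mass_nonneg[OF B] by (simp add: sum_nonneg)
  then have "A n \<le> 1"
    using Suc.IH start by linarith
  then obtain m where "has_mass (nto n) m" and "has_mass (\<lambda>s. nto (Suc n) s + nx (Suc n) s) m"
    using ctrans_has_mass[OF step] by blast
  then have "A n = A (Suc n) + B (Suc n)"
    using has_mass_unique[OF A[of n]] has_mass_unique[OF has_mass_add[OF A[of "Suc n"] B[of "Suc n"]]]
    by simp
  then show ?case
    using Suc.IH by simp
qed simp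

lemma derivationI:
  assumes to_mass: "\<And>n. \<exists>m. has_mass (nto n) m" and x_mass: "\<And>n. \<exists>m. has_mass (nx n) m"
    and start: "subdist (\<lambda>s. nto 0 s + nx 0 s)"
    and step: "\<And>n. subdist (nto n) \<Longrightarrow> ctrans (nto n) Tau (\<lambda>s. nto (Suc n) s + nx (Suc n) s)"
  shows "derivation nto nx"
proof -
  obtain A where A: "\<And>n. has_mass (nto n) (A n)"
    using to_mass by metis
  obtain B where B: "\<And>n. has_mass (nx n) (B n)"
    using x_mass by metis
  obtain m where "m \<le> 1" and "has_mass (\<lambda>s. nto 0 s + nx 0 s) m"
    using start unfolding subdist_iff_has_mass by blast
  then have start_mass: "A 0 + B 0 \<le> 1"
    using has_mass_unique[OF has_mass_add[OF A B]] by blast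
  then have A0: "A 0 \<le> 1"
    using has_mass_nonneg[OF B, of 0] by linarith
  have sub: "subdist (nto n)" if "A n \<le> 1" for n
    unfolding subdist_iff_has_mass using A that by blast
  have balance: "A n + (\<Sum>j<n. B (Suc j)) = A 0" for n
    by (rule ctrans_chain_mass_balance[where nto=nto and nx=nx, OF A B A0]) (rule step[OF sub])
  have sum_nonneg: "0 \<le> (\<Sum>j<n. B (Suc j))" for n
    using has_mass_nonneg[OF B] by (simp add: sum_nonneg)
  have "A n \<le> 1" for n
    using balance[of n] sum_nonneg[of n] A0 by linarith
  moreover have "B n \<le> 1" for n
  proof (cases n)
    case 0
    then show ?thesis
      using start_mass has_mass_nonneg[OF A, of 0] by simp
  next
    case (Suc m)
    have "B (Suc m) \<le> (\<Sum>j<Suc m. B (Suc j))"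
      using has_mass_nonneg[OF B] by (intro member_le_sum) auto
    then show ?thesis
      using balance[of "Suc m"] has_mass_nonneg[OF A, of "Suc m"] A0 unfolding Suc by linarith
  qed
  ultimately have "subdist (nto n)" and "subdist (nx n)" for n
    using sub B unfolding subdist_iff_has_mass by blast+
  then show ?thesis
    unfolding derivation_def using step by blast
qed

lemma derivation_summable:
  assumes D: "derivation mto mx"
  shows "summable (\<lambda>i. mx i s)"
proof -
  have "subdist (mto n)" "subdist (mx n)" for n
    using D by (simp_all add: derivation_def)
  then have "\<exists>a. a \<le> 1 \<and> has_mass (mto n) a" "\<exists>b. has_mass (mx n) b" for n
    unfolding subdist_iff_has_mass by blast+
  then obtain A B where A_le_mass: "\<And>n. A n \<le> 1 \<and> has_mass (mto n) (A n)"
    and B: "\<And>n. has_mass (mx n) (B n)"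
    by metis
  then have A0: "A 0 \<le> 1" and A: "\<And>n. has_mass (mto n) (A n)"
    by blast+
  have balance: "A n + (\<Sum>j<n. B (Suc j)) = A 0" for n
    by (rule ctrans_chain_mass_balance[where nto=mto and nx=mx, OF A B A0]) (use D in \<open>simp add: derivation_def\<close>)
  have "summable (\<lambda>i. mx (Suc i) s)"
  proof (rule bounded_imp_summable)
    show "0 \<le> mx (Suc n) s" for n
      using B by (simp add: has_mass_def)
    fix n
    have "(\<Sum>k\<le>n. mx (Suc k) s) \<le> (\<Sum>k<Suc n. B (Suc k))"
      unfolding lessThan_Suc_atMost by (intro sum_mono has_mass_point_le[OF B])
    then show "(\<Sum>k\<le>n. mx (Suc k) s) \<le> A 0"
      using balance[of "Suc n"] has_mass_nonneg[OF A, of "Suc n"] by linarith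
  qed
  then show ?thesis
    by (rule summable_Suc_iff[THEN iffD1])
qed

lemma derivation_prepend:
  assumes \<mu>: "subdist \<mu>" and step: "ctrans \<mu> Tau (\<lambda>s. nto 0 s + nx 0 s)" and D: "derivation nto nx"
  shows "derivation (case_nat \<mu> nto) (case_nat empty_dist nx)"
  unfolding derivation_def
proof (intro conjI allI)
  fix i
  have "subdist (nto j)" "subdist (nx j)" "ctrans (nto j) Tau (\<lambda>s. nto (Suc j) s + nx (Suc j) s)" for j
    using D by (simp_all add: derivation_def)
  then show "subdist (case_nat \<mu> nto i)" and "subdist (case_nat empty_dist nx i)"
    and "ctrans (case_nat \<mu> nto i) Tau (\<lambda>s. case_nat \<mu> nto (Suc i) s + case_nat empty_dist nx (Suc i) s)"
    using \<mu> step subdist_empty_dist by (cases i; simp)+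
qed

lemma derivation_split_step:
  fixes L Lx C :: "nat \<Rightarrow> ('a,'v) sdist"
  assumes D: "derivation L Lx" and nonneg: "\<And>k s. 0 \<le> C k s" and sums: "\<And>s. (\<lambda>k. C k s) sums L j s"
  obtains C' X' where "\<And>k. ctrans (C k) Tau (\<lambda>s. C' k s + X' k s)"
    and "\<And>s. (\<lambda>k. C' k s) sums L (Suc j) s" and "\<And>s. (\<lambda>k. X' k s) sums Lx (Suc j) s"
    and "\<And>k s. 0 \<le> C' k s" and "\<And>k s. 0 \<le> X' k s"
proof -
  have step: "ctrans (L j) Tau (\<lambda>s. L (Suc j) s + Lx (Suc j) s)"
    and next_nonneg: "0 \<le> L (Suc j) s" "0 \<le> Lx (Suc j) s" for s
    using D by (simp_all add: derivation_def subdist_def)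
  obtain T where T: "\<And>k. ctrans (C k) Tau (T k)"
    and T_sums: "\<And>s. (\<lambda>k. T k s) sums (L (Suc j) s + Lx (Suc j) s)"
    using ctrans_split[OF step nonneg sums] by blast
  have T_nonneg: "0 \<le> T k s" for k s
    using ctrans_has_mass[OF T[of k]] by (auto simp: has_mass_def)
  text \<open>Every \<open>T k\<close> is divided in the proportion \<open>r\<close> in which the target of the step divides
    into its continuing and its stopped part.\<close>
  define r where "r s = L (Suc j) s / (L (Suc j) s + Lx (Suc j) s)" for s
  have r: "0 \<le> r s" "r s \<le> 1" for s
    using next_nonneg[of s] by (auto simp: r_def divide_le_eq_1)
  have r_to: "r s * (L (Suc j) s + Lx (Suc j) s) = L (Suc j) s" for s
    using next_nonneg[of s] by (cases "L (Suc j) s + Lx (Suc j) s = 0") (auto simp: r_def)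
  then have r_x: "(1 - r s) * (L (Suc j) s + Lx (Suc j) s) = Lx (Suc j) s" for s
    by (simp add: left_diff_distrib)
  show ?thesis
  proof (rule that[of "\<lambda>k s. r s * T k s" "\<lambda>k s. (1 - r s) * T k s"])
    show "ctrans (C k) Tau (\<lambda>s. r s * T k s + (1 - r s) * T k s)" for k
      using T[of k] by (simp add: algebra_simps)
    show "(\<lambda>k. r s * T k s) sums L (Suc j) s" and "(\<lambda>k. (1 - r s) * T k s) sums Lx (Suc j) s" for s
      using sums_mult[OF T_sums[of s], of "r s"] sums_mult[OF T_sums[of s], of "1 - r s"] r_to r_x
      by simp_all
    show "0 \<le> r s * T k s" and "0 \<le> (1 - r s) * T k s" for k s
      using r[of s] T_nonneg[of k s] by simp_all
  qed
qed

lemma derivation_split: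
  fixes L Lx :: "nat \<Rightarrow> ('a,'v) sdist" and \<rho> :: "nat \<Rightarrow> ('a,'v) sdist"
  assumes D: "derivation L Lx" and parts_nonneg: "\<And>k s. 0 \<le> \<rho> k s"
    and parts: "\<And>s. (\<lambda>k. \<rho> k s) sums L 0 s"
  obtains C X where "C 0 = \<rho>" and "X 0 = (\<lambda>k. empty_dist)"
    and "\<And>j k. ctrans (C j k) Tau (\<lambda>s. C (Suc j) k s + X (Suc j) k s)"
    and "\<And>j s. (\<lambda>k. C j k s) sums L j s"
    and "\<And>j s. (\<lambda>k. X (Suc j) k s) sums Lx (Suc j) s"
    and "\<And>j k s. 0 \<le> X j k s"
proof -
  define P where "P j CX \<longleftrightarrow> (\<forall>k s. 0 \<le> fst CX k s \<and> 0 \<le> snd CX k s)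
      \<and> (\<forall>s. (\<lambda>k. fst CX k s) sums L j s) \<and> (j = 0 \<longrightarrow> CX = (\<rho>, \<lambda>k. empty_dist))"
    for j and CX :: "(nat \<Rightarrow> ('a,'v) sdist) \<times> (nat \<Rightarrow> ('a,'v) sdist)"
  define Q where "Q j CX CX' \<longleftrightarrow> (\<forall>k. ctrans (fst CX k) Tau (\<lambda>s. fst CX' k s + snd CX' k s))
      \<and> (\<forall>s. (\<lambda>k. snd CX' k s) sums Lx (Suc j) s)"
    for j and CX CX' :: "(nat \<Rightarrow> ('a,'v) sdist) \<times> (nat \<Rightarrow> ('a,'v) sdist)"
  have "\<exists>f. \<forall>j. P j (f j) \<and> Q j (f j) (f (Suc j))"
  proof (rule dependent_nat_choice)
    show "\<exists>CX. P 0 CX"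
      using parts_nonneg parts by (auto simp: P_def empty_dist_def)
  next
    fix CX j
    assume "P j CX"
    then obtain C' X' where "\<And>k. ctrans (fst CX k) Tau (\<lambda>s. C' k s + X' k s)"
      and "\<And>s. (\<lambda>k. C' k s) sums L (Suc j) s" and "\<And>s. (\<lambda>k. X' k s) sums Lx (Suc j) s"
      and "\<And>k s. 0 \<le> C' k s" and "\<And>k s. 0 \<le> X' k s"
      using derivation_split_step[OF D, of "fst CX" j] unfolding P_def by blast
    then show "\<exists>CX'. P (Suc j) CX' \<and> Q j CX CX'"
      by (intro exI[of _ "(C', X')"]) (simp add: P_def Q_def)
  qed
  then obtain f where f: "\<And>j. P j (f j)" "\<And>j. Q j (f j) (f (Suc j))"
    by blast
  show thesis
  proof (rule that[of "\<lambda>j. fst (f j)" "\<lambda>j. snd (f j)"])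
    show "fst (f 0) = \<rho>" and "snd (f 0) = (\<lambda>k. empty_dist)"
      using f(1)[of 0] by (simp_all add: P_def)
  qed (use f in \<open>simp_all add: P_def Q_def\<close>)
qed

lemma derivation_suminf_shift:
  assumes "derivation mto mx" and "mx 0 = empty_dist"
  shows "(\<lambda>s. \<Sum>i. mx (Suc i) s) = (\<lambda>s. \<Sum>i. mx i s)"
proof
  fix s
  show "(\<Sum>i. mx (Suc i) s) = (\<Sum>i. mx i s)"
    using suminf_split_head[OF derivation_summable[OF assms(1), of s]] assms(2)
    by (simp add: empty_dist_def)
qed

section \<open>Composing weak transitions\<close>

text \<open>\<open>D j k\<close> is the \<open>k\<close>-th family at its own time \<open>j\<close>; family \<open>k\<close> is started at time \<open>k\<close>.\<close>

definition stagger :: "(nat \<Rightarrow> nat \<Rightarrow> 's \<Rightarrow> real) \<Rightarrow> nat \<Rightarrow> 's \<Rightarrow> real" where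
  "stagger D n = (\<lambda>s. \<Sum>k\<le>n. D (n - k) k s)"

lemma stagger_Suc: "stagger D (Suc n) s = D 0 (Suc n) s + (\<Sum>k\<le>n. D (Suc n - k) k s)"
  by (simp add: stagger_def)

lemma ctrans_stagger:
  fixes mto mx :: "nat \<Rightarrow> ('a,'v) sdist" and Cs Xs :: "nat \<Rightarrow> nat \<Rightarrow> ('a,'v) sdist"
  assumes Dm: "derivation mto mx" and C0: "Cs 0 = mx" and X0: "Xs 0 = (\<lambda>k. empty_dist)"
    and steps: "\<And>j k. ctrans (Cs j k) Tau (\<lambda>s. Cs (Suc j) k s + Xs (Suc j) k s)"
    and mass: "has_mass (\<lambda>s. mto n s + stagger Cs n s) m" "m \<le> 1"
  shows "ctrans (\<lambda>s. mto n s + stagger Cs n s) Tau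
    (\<lambda>s. (mto (Suc n) s + stagger Cs (Suc n) s) + stagger Xs (Suc n) s)"
proof -
  define P where "P k = (if k \<le> n then Cs (n - k) k else mto n)" for k
  define Q where "Q k = (if k \<le> n then (\<lambda>s. Cs (Suc n - k) k s + Xs (Suc n - k) k s)
    else (\<lambda>s. mto (Suc n) s + mx (Suc n) s))" for k
  have "ctrans (P k) Tau (Q k)" if "k \<le> Suc n" for k
  proof (cases "k \<le> n")
    case True
    then show ?thesis
      using steps[of "n - k" k] by (simp add: P_def Q_def Suc_diff_le)
  next
    case False
    then show ?thesis
      using that Dm by (simp add: P_def Q_def derivation_def)
  qed
  moreover have "(\<lambda>s. \<Sum>k\<le>Suc n. P k s) = (\<lambda>s. mto n s + stagger Cs n s)"
    by (simp add: P_def stagger_def fun_eq_iff)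
  moreover have "(\<lambda>s. \<Sum>k\<le>Suc n. Q k s) = (\<lambda>s. (mto (Suc n) s + stagger Cs (Suc n) s) + stagger Xs (Suc n) s)"
    by (simp add: Q_def stagger_Suc C0 X0 empty_dist_def fun_eq_iff sum.distrib)
  ultimately show ?thesis
    using ctrans_sum[of "Suc n" P Tau Q m] mass by simp
qed

lemma derivation_stagger:
  fixes mto mx :: "nat \<Rightarrow> ('a,'v) sdist" and Cs Xs :: "nat \<Rightarrow> nat \<Rightarrow> ('a,'v) sdist"
  assumes Dm: "derivation mto mx" and C0: "Cs 0 = mx" and X0: "Xs 0 = (\<lambda>k. empty_dist)"
    and steps: "\<And>j k. ctrans (Cs j k) Tau (\<lambda>s. Cs (Suc j) k s + Xs (Suc j) k s)"
    and X_nonneg: "\<And>j k s. 0 \<le> Xs j k s" and start: "subdist (\<lambda>s. mto 0 s + mx 0 s)"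
  shows "derivation (\<lambda>n s. mto n s + stagger Cs n s) (stagger Xs)"
proof (rule derivationI)
  obtain cm where cm: "\<And>j k. has_mass (Cs j k) (cm j k)"
    using ctrans_has_mass[OF steps] by metis
  have "\<exists>m. has_mass (Xs j k) m" for j k
  proof (cases j)
    case 0
    then show ?thesis
      using X0 has_mass_zero by (auto simp: empty_dist_def)
  next
    case (Suc i)
    obtain m where "has_mass (\<lambda>s. Cs j k s + Xs j k s) m"
      using ctrans_has_mass[OF steps[of i k]] Suc by blast
    then show ?thesis
      by (rule has_mass_dominated) (use X_nonneg cm[of j k] in \<open>auto simp: has_mass_def\<close>)
  qed
  then obtain xm where xm: "\<And>j k. has_mass (Xs j k) (xm j k)"
    by metis
  show "\<exists>m. has_mass (stagger Xs n) m" for n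
  proof -
    have "has_mass (stagger Xs n) (\<Sum>k\<le>n. xm (n - k) k)"
      unfolding stagger_def by (rule has_mass_sum) (auto intro: xm)
    then show ?thesis ..
  qed
  show "\<exists>m. has_mass (\<lambda>s. mto n s + stagger Cs n s) m" for n
  proof -
    have "subdist (mto n)"
      using Dm by (simp add: derivation_def)
    then obtain a where "has_mass (mto n) a"
      unfolding subdist_iff_has_mass by blast
    moreover have "has_mass (stagger Cs n) (\<Sum>k\<le>n. cm (n - k) k)"
      unfolding stagger_def by (rule has_mass_sum) (auto intro: cm)
    ultimately show ?thesis
      using has_mass_add by blast
  qed
  show "subdist (\<lambda>s. mto 0 s + stagger Cs 0 s + stagger Xs 0 s)"
    using start by (simp add: stagger_def C0 X0 empty_dist_def)
  show "ctrans (\<lambda>s. mto n s + stagger Cs n s) Tau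
      (\<lambda>s. mto (Suc n) s + stagger Cs (Suc n) s + stagger Xs (Suc n) s)"
    if sub: "subdist (\<lambda>s. mto n s + stagger Cs n s)" for n
  proof -
    obtain m where m: "has_mass (\<lambda>s. mto n s + stagger Cs n s) m" "m \<le> 1"
      using sub unfolding subdist_iff_has_mass by blast
    show ?thesis
      by (rule ctrans_stagger[where Cs=Cs and Xs=Xs, OF Dm C0 X0 steps m])
  qed
qed

lemma derivation_through_ctrans:
  fixes mto mx kto kx :: "nat \<Rightarrow> ('a,'v) sdist"
  assumes Dm: "derivation mto mx" and step: "ctrans (\<lambda>s. \<Sum>i. mx i s) Tau (\<lambda>s. kto 0 s + kx 0 s)"
    and Dk: "derivation kto kx" and start: "subdist (\<lambda>s. mto 0 s + mx 0 s)"
  obtains nto nx where "derivation nto nx" and "(\<lambda>s. nto 0 s + nx 0 s) = (\<lambda>s. mto 0 s + mx 0 s)"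
    and "nx 0 = empty_dist" and "(\<lambda>s. \<Sum>i. nx i s) = (\<lambda>s. \<Sum>i. kx i s)"
proof -
  define \<rho> where "\<rho> = (\<lambda>s. \<Sum>i. mx i s)"
  have mx_nonneg: "0 \<le> mx i s" for i s
    using Dm by (simp add: derivation_def subdist_def)
  have mx_sums: "(\<lambda>i. mx i s) sums case_nat \<rho> kto 0 s" for s
    using derivation_summable[OF Dm] by (simp add: \<rho>_def summable_sums)
  have "subdist \<rho>"
    using ctrans_has_mass[OF step] unfolding subdist_iff_has_mass \<rho>_def by blast
  then have DL: "derivation (case_nat \<rho> kto) (case_nat empty_dist kx)"
    using derivation_prepend[OF _ step[folded \<rho>_def] Dk] by blast
  obtain Cs Xs where C0: "Cs 0 = mx" and X0: "Xs 0 = (\<lambda>k. empty_dist)"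
    and steps: "\<And>j k. ctrans (Cs j k) Tau (\<lambda>s. Cs (Suc j) k s + Xs (Suc j) k s)"
    and X_sums: "\<And>j s. (\<lambda>k. Xs (Suc j) k s) sums case_nat empty_dist kx (Suc j) s"
    and X_nonneg: "\<And>j k s. 0 \<le> Xs j k s"
    using derivation_split[OF DL mx_nonneg mx_sums] by blast
  have init: "(\<lambda>s. mto 0 s + stagger Cs 0 s + stagger Xs 0 s) = (\<lambda>s. mto 0 s + mx 0 s)"
    and stop0: "stagger Xs 0 = empty_dist"
    by (simp_all add: stagger_def C0 X0 empty_dist_def fun_eq_iff)
  have total: "(\<lambda>s. \<Sum>i. stagger Xs i s) = (\<lambda>s. \<Sum>i. kx i s)"
  proof
    fix s
    have "(\<lambda>k. Xs m k s) sums case_nat empty_dist kx m s" for m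
      using X0 X_sums by (cases m) (simp_all add: empty_dist_def)
    moreover have "(\<lambda>m. case_nat empty_dist kx m s) sums (\<Sum>i. kx i s)"
      using summable_sums[OF derivation_summable[OF DL, of s]] derivation_suminf_shift[OF DL]
      by (simp add: fun_eq_iff)
    ultimately have "(\<lambda>n. stagger Xs n s) sums (\<Sum>i. kx i s)"
      unfolding stagger_def using X_nonneg by (intro nonneg_sums_diagonal) auto
    then show "(\<Sum>i. stagger Xs i s) = (\<Sum>i. kx i s)"
      by (simp add: sums_iff)
  qed
  show ?thesis
    by (rule that[of "\<lambda>n s. mto n s + stagger Cs n s" "stagger Xs",
          OF derivation_stagger[where Cs=Cs and Xs=Xs, OF Dm C0 X0 steps X_nonneg start] init stop0 total])
qed

lemma weak_refl:
  fixes \<mu> :: "('a,'v) sdist"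
  assumes "subdist \<mu>"
  shows "weak \<mu> \<mu>"
proof -
  define mx where "mx i = (if i = 0 then \<mu> else empty_dist)" for i :: nat
  have "ctrans empty_dist Tau (\<lambda>s. empty_dist s + empty_dist (s :: ('a,'v) nexp))"
    using ctrans_zero by (simp add: empty_dist_def)
  then have "derivation (\<lambda>_. empty_dist) mx"
    using assms by (simp add: derivation_def mx_def subdist_empty_dist)
  moreover have "(\<lambda>i. mx i s) sums \<mu> s" for s
  proof -
    have "(\<lambda>i. mx i s) = (\<lambda>i. if i = 0 then \<mu> s else 0)"
      by (simp add: mx_def empty_dist_def fun_eq_iff)
    then show ?thesis
      using sums_single[of 0 "\<lambda>_. \<mu> s"] by simp
  qed
  ultimately show ?thesis
    unfolding weak_def
    by (intro exI[of _ "\<lambda>_. empty_dist"] exI[of _ mx]) (auto simp: mx_def empty_dist_def sums_iff)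
qed

lemma ctrans_weak_iff_derivation:
  assumes "subdist \<mu>"
  shows "(\<exists>\<rho>. ctrans \<mu> Tau \<rho> \<and> weak \<rho> \<nu>) \<longleftrightarrow>
    (\<exists>nto nx. derivation nto nx \<and> \<mu> = (\<lambda>s. nto 0 s + nx 0 s)
       \<and> \<nu> = (\<lambda>s. \<Sum>i. nx i s) \<and> nx 0 = empty_dist)"
proof
  assume "\<exists>\<rho>. ctrans \<mu> Tau \<rho> \<and> weak \<rho> \<nu>"
  then obtain mto mx where step: "ctrans \<mu> Tau (\<lambda>s. mto 0 s + mx 0 s)"
    and D: "derivation mto mx" and \<nu>: "\<nu> = (\<lambda>s. \<Sum>i. mx i s)"
    unfolding weak_def by blast
  have "derivation (case_nat \<mu> mto) (case_nat empty_dist mx)"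
    by (rule derivation_prepend[OF assms step D])
  moreover have "\<nu> = (\<lambda>s. \<Sum>i. case_nat empty_dist mx i s)"
    using derivation_suminf_shift[OF calculation] \<nu> by simp
  ultimately show "\<exists>nto nx. derivation nto nx \<and> \<mu> = (\<lambda>s. nto 0 s + nx 0 s)
       \<and> \<nu> = (\<lambda>s. \<Sum>i. nx i s) \<and> nx 0 = empty_dist"
    by (intro exI[of _ "case_nat \<mu> mto"] exI[of _ "case_nat empty_dist mx"]) (simp add: empty_dist_def)
next
  assume "\<exists>nto nx. derivation nto nx \<and> \<mu> = (\<lambda>s. nto 0 s + nx 0 s)
       \<and> \<nu> = (\<lambda>s. \<Sum>i. nx i s) \<and> nx 0 = empty_dist"
  then obtain nto nx where D: "derivation nto nx" and \<mu>: "\<mu> = (\<lambda>s. nto 0 s + nx 0 s)"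
    and \<nu>: "\<nu> = (\<lambda>s. \<Sum>i. nx i s)" and nx0: "nx 0 = empty_dist"
    by blast
  have "ctrans \<mu> Tau (\<lambda>s. nto 1 s + nx 1 s)"
    using D \<mu> nx0 by (simp add: derivation_def empty_dist_def)
  moreover have "weak (\<lambda>s. nto 1 s + nx 1 s) \<nu>"
    unfolding weak_def
  proof (intro exI conjI)
    show "derivation (\<lambda>i. nto (Suc i)) (\<lambda>i. nx (Suc i))"
      using D by (simp add: derivation_def)
    show "\<nu> = (\<lambda>s. \<Sum>i. nx (Suc i) s)"
      using derivation_suminf_shift[OF D nx0] \<nu> by simp
  qed simp
  ultimately show "\<exists>\<rho>. ctrans \<mu> Tau \<rho> \<and> weak \<rho> \<nu>"
    by blast
qed

lemma weak_trans_Tau_imp_derivation: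
  assumes "subdist \<mu>" and "weak_trans \<mu> Tau \<nu>"
  shows "\<exists>nto nx. derivation nto nx \<and> \<mu> = (\<lambda>s. nto 0 s + nx 0 s)
    \<and> \<nu> = (\<lambda>s. \<Sum>i. nx i s) \<and> nx 0 = empty_dist"
proof -
  obtain \<rho> \<eta> where "weak \<mu> \<rho>" and step: "ctrans \<rho> Tau \<eta>" and "weak \<eta> \<nu>"
    using assms(2) unfolding weak_trans_def by blast
  then obtain mto mx kto kx where Dm: "derivation mto mx" and \<mu>: "\<mu> = (\<lambda>s. mto 0 s + mx 0 s)"
    and \<rho>: "\<rho> = (\<lambda>s. \<Sum>i. mx i s)" and Dk: "derivation kto kx"
    and \<eta>: "\<eta> = (\<lambda>s. kto 0 s + kx 0 s)" and \<nu>: "\<nu> = (\<lambda>s. \<Sum>i. kx i s)"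
    unfolding weak_def by blast
  obtain nto nx where "derivation nto nx" and "(\<lambda>s. nto 0 s + nx 0 s) = (\<lambda>s. mto 0 s + mx 0 s)"
    and "nx 0 = empty_dist" and "(\<lambda>s. \<Sum>i. nx i s) = (\<lambda>s. \<Sum>i. kx i s)"
    using derivation_through_ctrans[OF Dm step[unfolded \<rho> \<eta>] Dk assms(1)[unfolded \<mu>]] by blast
  then show ?thesis
    by (intro exI[of _ nto] exI[of _ nx]) (simp add: \<mu> \<nu>)
qed

theorem mainTheorem10:
  fixes \<mu> \<nu> :: "('a,'v) sdist"
  assumes "subdist \<mu>" and "subdist \<nu>"
  shows "(weak_trans \<mu> Tau \<nu> \<longleftrightarrow> (\<exists>\<rho>. ctrans \<mu> Tau \<rho> \<and> weak \<rho> \<nu>))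
       \<and> ((\<exists>\<rho>. ctrans \<mu> Tau \<rho> \<and> weak \<rho> \<nu>) \<longleftrightarrow>
          (\<exists>nto nx. derivation nto nx \<and> \<mu> = (\<lambda>s. nto 0 s + nx 0 s)
              \<and> \<nu> = (\<lambda>s. \<Sum>i. nx i s) \<and> nx 0 = empty_dist))"
proof -
  have b_iff_c: "(\<exists>\<rho>. ctrans \<mu> Tau \<rho> \<and> weak \<rho> \<nu>) \<longleftrightarrow>
      (\<exists>nto nx. derivation nto nx \<and> \<mu> = (\<lambda>s. nto 0 s + nx 0 s)
         \<and> \<nu> = (\<lambda>s. \<Sum>i. nx i s) \<and> nx 0 = empty_dist)"
    by (rule ctrans_weak_iff_derivation[OF assms(1)])
  moreover have "weak_trans \<mu> Tau \<nu> \<Longrightarrow> \<exists>nto nx. derivation nto nx \<and> \<mu> = (\<lambda>s. nto 0 s + nx 0 s)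
      \<and> \<nu> = (\<lambda>s. \<Sum>i. nx i s) \<and> nx 0 = empty_dist"
    by (rule weak_trans_Tau_imp_derivation[OF assms(1)])
  moreover have "(\<exists>\<rho>. ctrans \<mu> Tau \<rho> \<and> weak \<rho> \<nu>) \<Longrightarrow> weak_trans \<mu> Tau \<nu>"
    using weak_refl[OF assms(1)] unfolding weak_trans_def by blast
  ultimately show ?thesis
    by blast
qed

end
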